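(* Let $n\ge 2$. Then $\mathrm{P}=\Gamma^{(0)}=\Gamma^{(1)}$, where $$\Gamma^{(j)}=\{T\in\mathrm{C}^\times:\ T\,\mathrm{C}^{(j)}\,T^{-1}\subseteq\mathrm{C}^{(j)}\},\quad j=0,1.$$ Explicitly, $\mathrm{P}=\mathrm{C}^{\times(0)}\cup\mathrm{C}^{\times(1)}$ if $n$ is even, and $\mathrm{P}=\mathrm{Z}^\times\,\mathrm{C}^{\times(0)}$ if $n$ is odd.
   Context: Let $\mathrm{C}$ be either the real Clifford algebra $C\ell_{p,q}$ with $p+q=n$, or the complex Clifford algebra $C\ell(\mathbb{C}^n)$. It has identity $e$ and generators $e_1,\dots,e_n$ satisfying $e_ae_b+e_be_a=2\eta_{ab}e$. In the real case $\eta=\mathrm{diag}(1,\dots,1,-1,\dots,-1)$ with $p$ entries $+1$ and $q$ entries $-1$. In the complex case $\eta=I_n$. $\mathrm{C}^k$ is the grade-$k$ subspace, spanned by the products $e_{a_1}\cdots e_{a_k}$ with $a_1<\dots<a_k$. The even subspace is $\mathrm{C}^{(0)}=\bigoplus_{k\text{ even}}\mathrm{C}^k$ and the odd subspace is $\mathrm{C}^{(1)}=\bigoplus_{k\text{ odd}}\mathrm{C}^k$. For $S\subseteq\mathrm{C}$, $S^\times$ is the set of elements of $S$ invertible in $\mathrm{C}$, and $\mathrm{C}^{\times(j)}:=(\mathrm{C}^{(j)})^\times$. $\mathrm{Z}$ is the center of $\mathrm{C}$: $\mathrm{Z}=\mathrm{C}^0$ for $n$ even and $\mathrm{Z}=\mathrm{C}^0\oplus\mathrm{C}^n$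 for $n$ odd. Define $$\mathrm{P}:=\mathrm{Z}^\times(\mathrm{C}^{\times(0)}\cup\mathrm{C}^{\times(1)})=\{WT:\ W\in\mathrm{Z}^\times,\ T\in\mathrm{C}^{\times(0)}\cup\mathrm{C}^{\times(1)}\}.$$ *)

theory Defs
  imports Complex_Main
begin

text \<open>Clifford algebra on generators e_0,...,e_(n-1) (0-based indexing of e_1..e_n)
 over a field 'a with diagonal metric given by sig (sig a = eta_aa).
 An element is a coefficient function on basis blades e_A, A a subset of {..<n};
 coefficients outside Pow {..<n} are zero.\<close>

type_synonym 'a clif = "nat set \<Rightarrow> 'a"

definition cl_carrier :: "nat \<Rightarrow> ('a::field) clif set" where
  "cl_carrier n = {x. \<forall>A. \<not> A \<subseteq> {..<n} \<longrightarrow> x A = 0}"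

text \<open>e_A e_B = blade_sign sig A B * e_(A symmetric-difference B), for A, B finite.\<close>
definition blade_sign :: "(nat \<Rightarrow> 'a::field) \<Rightarrow> nat set \<Rightarrow> nat set \<Rightarrow> 'a" where
  "blade_sign sig A B =
     (-1) ^ card {(a, b). a \<in> A \<and> b \<in> B \<and> b < a} * (\<Prod>a\<in>A \<inter> B. sig a)"

definition cl_mult :: "nat \<Rightarrow> (nat \<Rightarrow> 'a::field) \<Rightarrow> 'a clif \<Rightarrow> 'a clif \<Rightarrow> 'a clif" where
  "cl_mult n sig x y = (\<lambda>C. if C \<subseteq> {..<n}
      then (\<Sum>A\<in>Pow {..<n}. x A * y (A - C \<union> (C - A)) * blade_sign sig A (A - C \<union> (C - A)))
      else 0)"

definition cl_one :: "('a::field) clif" where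
  "cl_one = (\<lambda>C. if C = {} then 1 else 0)"

definition cl_gen :: "nat \<Rightarrow> ('a::field) clif" where
  "cl_gen a = (\<lambda>C. if C = {a} then 1 else 0)"

definition cl_grade :: "nat \<Rightarrow> nat \<Rightarrow> ('a::field) clif set" where
  "cl_grade n k = {x \<in> cl_carrier n. \<forall>A. x A \<noteq> 0 \<longrightarrow> card A = k}"

definition cl_par :: "nat \<Rightarrow> nat \<Rightarrow> ('a::field) clif set" where
  "cl_par n j = {x \<in> cl_carrier n. \<forall>A. x A \<noteq> 0 \<longrightarrow> card A mod 2 = j}"

definition cl_units :: "nat \<Rightarrow> (nat \<Rightarrow> 'a::field) \<Rightarrow> 'a clif set \<Rightarrow> 'a clif set" where
  "cl_units n sig S = {x \<in> S. \<exists>y \<in> cl_carrier n.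
       cl_mult n sig x y = cl_one \<and> cl_mult n sig y x = cl_one}"

definition cl_inv :: "nat \<Rightarrow> (nat \<Rightarrow> 'a::field) \<Rightarrow> 'a clif \<Rightarrow> 'a clif" where
  "cl_inv n sig x = (THE y. y \<in> cl_carrier n \<and>
       cl_mult n sig x y = cl_one \<and> cl_mult n sig y x = cl_one)"

definition cl_center :: "nat \<Rightarrow> (nat \<Rightarrow> 'a::field) \<Rightarrow> 'a clif set" where
  "cl_center n sig = {x \<in> cl_carrier n. \<forall>y \<in> cl_carrier n. cl_mult n sig x y = cl_mult n sig y x}"

definition cl_P :: "nat \<Rightarrow> (nat \<Rightarrow> 'a::field) \<Rightarrow> 'a clif set" where
  "cl_P n sig = {cl_mult n sig W T | W T. W \<in> cl_units n sig (cl_center n sig) \<and>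
       T \<in> cl_units n sig (cl_par n 0) \<union> cl_units n sig (cl_par n 1)}"

definition cl_Gamma :: "nat \<Rightarrow> (nat \<Rightarrow> 'a::field) \<Rightarrow> nat \<Rightarrow> 'a clif set" where
  "cl_Gamma n sig j = {T \<in> cl_units n sig (cl_carrier n).
       \<forall>X \<in> cl_par n j. cl_mult n sig (cl_mult n sig T X) (cl_inv n sig T) \<in> cl_par n j}"

definition cl_thm_concl :: "nat \<Rightarrow> (nat \<Rightarrow> 'a::field) \<Rightarrow> bool" where
  "cl_thm_concl n sig \<longleftrightarrow>
     cl_P n sig = cl_Gamma n sig 0 \<and> cl_P n sig = cl_Gamma n sig 1 \<and>
     (even n \<longrightarrow> cl_P n sig = cl_units n sig (cl_par n 0) \<union> cl_units n sig (cl_par n 1)) \<and>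
     (odd n \<longrightarrow> cl_P n sig = {cl_mult n sig W T | W T.
          W \<in> cl_units n sig (cl_center n sig) \<and> T \<in> cl_units n sig (cl_par n 0)})"

definition sig_pq :: "nat \<Rightarrow> nat \<Rightarrow> real" where
  "sig_pq p a = (if a < p then 1 else -1)"

end

theory Submission
  imports Defs "HOL-Library.Function_Algebras"
begin

text \<open>Let \<open>\<alpha>\<close> be the grade involution and \<open>\<omega> = e\<^sub>1 \<cdots> e\<^sub>n\<close> the pseudoscalar.
  Since \<open>\<alpha>\<close> acts on \<open>C(j)\<close> by a sign, a unit \<open>T\<close> normalising \<open>C(j)\<close> induces there the same
  conjugation as \<open>\<alpha> T\<close>, so \<open>T\<^sup>-\<^sup>1 \<alpha> T\<close> commutes with \<open>C(j)\<close>. For either parity this commutant is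
  spanned by \<open>1\<close> and \<open>\<omega>\<close>, hence \<open>\<alpha> T = T (l + m \<omega>)\<close>.
  For even \<open>n\<close>, \<open>\<alpha> \<omega> = \<omega>\<close> gives \<open>(l + m \<omega>)\<^sup>2 = 1\<close>, so \<open>l m = 0\<close>; \<open>m \<noteq> 0\<close> would force \<open>m \<omega> = 1\<close>,
  so \<open>\<alpha> T = l T\<close> and \<open>T\<close> is homogeneous. For odd \<open>n\<close>, \<open>\<omega>\<close> is central and odd, and comparing
  even and odd parts gives \<open>T = (1 + c \<omega>) T\<^sub>0\<close> with \<open>T\<^sub>0\<close> even, or \<open>T = \<omega> T\<^sub>0\<close> when \<open>l = -1\<close>.
  Conversely, conjugation by a central unit times a homogeneous unit preserves both parities.\<close>

definition symdiff :: "'b set \<Rightarrow> 'b set \<Rightarrow> 'b set" where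
  "symdiff A B = A - B \<union> (B - A)"

lemma symdiff_cancel [simp]:
  "symdiff A (symdiff A B) = B" "symdiff (symdiff A B) B = A"
  "symdiff {} B = B" "symdiff B {} = B" "symdiff B B = {}"
  by (auto simp: symdiff_def)

lemma symdiff_assoc: "symdiff (symdiff A B) D = symdiff A (symdiff B D)"
  by (auto simp: symdiff_def)

lemma symdiff_left_commute: "symdiff A (symdiff B D) = symdiff B (symdiff A D)"
  by (auto simp: symdiff_def)

lemma symdiff_symdiff_left: "symdiff (symdiff A B) (symdiff A D) = symdiff B D"
  by (auto simp: symdiff_def)

lemma symdiff_symdiff_chain: "symdiff (symdiff A B) (symdiff B D) = symdiff A D"
  by (auto simp: symdiff_def)

lemma symdiff_subset: "A \<subseteq> N \<Longrightarrow> B \<subseteq> N \<Longrightarrow> symdiff A B \<subseteq> N"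
  by (auto simp: symdiff_def)

lemma symdiff_eq_iff: "symdiff A D = C \<longleftrightarrow> A = symdiff C D"
  by (auto simp: symdiff_def)

lemma minus_one_power_card_eq_prod:
  assumes "finite U" "S \<subseteq> U"
  shows "(-1::'a::comm_ring_1) ^ card S = (\<Prod>p\<in>U. if p \<in> S then -1 else 1)"
  using assms by (simp add: prod.If_cases Int_absorb1)

lemma blade_sign_eq_prod:
  assumes "finite N" "A \<subseteq> N" "B \<subseteq> N"
  shows "blade_sign sig A B =
           (\<Prod>(a, b)\<in>N \<times> N. if a \<in> A \<and> b \<in> B \<and> b < a then -1 else 1)
         * (\<Prod>i\<in>N. if i \<in> A \<and> i \<in> B then sig i else 1)"
proof -
  have "(\<Prod>i\<in>N. if i \<in> A \<and> i \<in> B then sig i else 1) = prod sig (A \<inter> B)"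
    using assms by (simp add: prod.If_cases flip: Collect_conj_eq Int_def) (simp add: Int_absorb1 le_infI1)
  moreover have "(-1) ^ card {(a, b). a \<in> A \<and> b \<in> B \<and> b < a}
      = (\<Prod>(a, b)\<in>N \<times> N. if a \<in> A \<and> b \<in> B \<and> b < a then -1 else (1::'a))"
    using assms by (subst minus_one_power_card_eq_prod[where U = "N \<times> N"]) (auto intro!: prod.cong)
  ultimately show ?thesis
    by (simp add: blade_sign_def)
qed

text \<open>Pair by pair, both sides count the same inversions and the same repeated generators modulo 2.\<close>

lemma blade_sign_cocycle:
  assumes "finite N" "P \<subseteq> N" "Q \<subseteq> N" "R \<subseteq> N"
  shows "blade_sign sig P Q * blade_sign sig (symdiff P Q) R
       = blade_sign sig P (symdiff Q R) * blade_sign sig Q R"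
proof -
  define inv where "inv A B = (\<Prod>(a, b)\<in>N \<times> N. if a \<in> A \<and> b \<in> B \<and> b < a then -1 else (1::'a))"
    for A B
  define met where "met A B = (\<Prod>i\<in>N. if i \<in> A \<and> i \<in> B then sig i else 1)" for A B
  have inv: "inv P Q * inv (symdiff P Q) R = inv P (symdiff Q R) * inv Q R"
    unfolding inv_def prod.distrib[symmetric] by (rule prod.cong) (auto simp: symdiff_def)
  have met: "met P Q * met (symdiff P Q) R = met P (symdiff Q R) * met Q R"
    unfolding met_def prod.distrib[symmetric] by (rule prod.cong) (auto simp: symdiff_def)
  have "blade_sign sig P Q * blade_sign sig (symdiff P Q) R
      = (inv P Q * inv (symdiff P Q) R) * (met P Q * met (symdiff P Q) R)"
    using assms by (simp add: blade_sign_eq_prod symdiff_subset inv_def met_def mult_ac)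
  also have "\<dots> = (inv P (symdiff Q R) * inv Q R) * (met P (symdiff Q R) * met Q R)"
    by (simp only: inv met)
  also have "\<dots> = blade_sign sig P (symdiff Q R) * blade_sign sig Q R"
    using assms by (simp add: blade_sign_eq_prod symdiff_subset inv_def met_def mult_ac)
  finally show ?thesis .
qed

lemma card_inversions_add:
  fixes A B :: "nat set"
  assumes "finite A" "finite B"
  shows "card {(a, b). a \<in> A \<and> b \<in> B \<and> b < a} + card {(a, b). a \<in> B \<and> b \<in> A \<and> b < a}
         + card (A \<inter> B) = card A * card B"
proof -
  let ?less = "{(a, b). a \<in> A \<and> b \<in> B \<and> b < a}"
  let ?greater = "{(a, b). a \<in> A \<and> b \<in> B \<and> a < b}"
  let ?diag = "{(a, b). a \<in> A \<and> b \<in> B \<and> a = b}"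
  have fin: "finite ?less" "finite ?greater" "finite ?diag"
    using assms by (auto intro: finite_subset[of _ "A \<times> B"])
  have "card A * card B = card (?less \<union> (?greater \<union> ?diag))"
    by (simp add: card_cartesian_product[symmetric]) (rule arg_cong[where f = card], auto)
  also have "\<dots> = card ?less + (card ?greater + card ?diag)"
    using fin by (subst card_Un_disjoint; auto)+
  finally have "card A * card B = card ?less + (card ?greater + card ?diag)" .
  moreover have "card ?greater = card {(a, b). a \<in> B \<and> b \<in> A \<and> b < a}"
    by (rule bij_betw_same_card[of prod.swap]) (auto simp: bij_betw_def image_iff)
  moreover have "card ?diag = card (A \<inter> B)"
    by (rule bij_betw_same_card[of fst]) (auto simp: bij_betw_def inj_on_def image_iff)
  ultimately show ?thesis
    by simp
qed

lemma blade_sign_swap: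
  assumes "finite A" "finite B"
  shows "blade_sign sig A B = (-1) ^ (card A * card B + card (A \<inter> B)) * blade_sign sig B A"
proof -
  define k where "k = card {(a, b). a \<in> B \<and> b \<in> A \<and> b < a}"
  have e: "card A * card B + card (A \<inter> B) + k
      = card {(a, b). a \<in> A \<and> b \<in> B \<and> b < a} + 2 * (k + card (A \<inter> B))"
    using card_inversions_add[OF assms] by (simp add: k_def)
  have "(-1::'a) ^ (card A * card B + card (A \<inter> B)) * (-1) ^ k
      = (-1) ^ card {(a, b). a \<in> A \<and> b \<in> B \<and> b < a}"
    by (simp only: power_add[symmetric] e) (simp add: power_add power_mult)
  then show ?thesis
    by (simp add: blade_sign_def k_def Int_commute mult.assoc[symmetric])
qed

lemma blade_sign_empty [simp]: "blade_sign sig {} B = 1" "blade_sign sig B {} = 1"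
  by (simp_all add: blade_sign_def)

lemma minus_one_power_eq_iff: "(-1::'a::ring_char_0) ^ k = (-1) ^ j \<longleftrightarrow> (even k \<longleftrightarrow> even j)"
  by (simp add: minus_one_power_iff)

lemma card_symdiff_add:
  "finite A \<Longrightarrow> finite D \<Longrightarrow> card (symdiff A D) + 2 * card (A \<inter> D) = card A + card D"
  by (simp add: symdiff_def card_Un_disjoint card_Int_Diff[of A D] card_Int_Diff[of D A]
      Int_commute disjoint_iff)

lemma minus_one_power_card_symdiff:
  assumes "finite A" "finite D"
  shows "(-1::'a::ring_1) ^ card A * (-1) ^ card (symdiff A D) = (-1) ^ card D"
proof -
  have "card A + card (symdiff A D) = card D + 2 * card (A - D)"
    using card_symdiff_add[OF assms] card_Int_Diff[OF assms(1), of D] by simp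
  then show ?thesis
    by (simp add: power_add[symmetric]) (simp add: power_add power_mult)
qed

definition cl_scale :: "'a::field \<Rightarrow> 'a clif \<Rightarrow> 'a clif" where
  "cl_scale c x = (\<lambda>A. c * x A)"

definition cl_blade :: "nat set \<Rightarrow> 'a::field clif" where
  "cl_blade B = (\<lambda>A. if A = B then 1 else 0)"

definition grade_involution :: "'a::field clif \<Rightarrow> 'a clif" where
  "grade_involution x = (\<lambda>A. (-1) ^ card A * x A)"

lemma cl_scale_scale [simp]: "cl_scale a (cl_scale b x) = cl_scale (a * b) x"
  by (simp add: cl_scale_def mult.assoc)

lemma cl_scale_zero [simp]: "cl_scale 0 x = 0"
  by (simp add: cl_scale_def fun_eq_iff)

lemma cl_scale_one [simp]: "cl_scale 1 x = x"
  by (simp add: cl_scale_def)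

lemma cl_scale_cancel: "c \<noteq> 0 \<Longrightarrow> cl_scale c x = cl_scale c y \<Longrightarrow> x = y"
  by (rule ext) (drule fun_cong, simp add: cl_scale_def)

lemma grade_involution_involutive [simp]: "grade_involution (grade_involution x) = x"
  by (simp add: grade_involution_def mult.assoc[symmetric] power_mult_distrib[symmetric])

lemma grade_involution_one [simp]: "grade_involution cl_one = cl_one"
  by (rule ext) (simp add: grade_involution_def cl_one_def)

lemma grade_involution_blade: "grade_involution (cl_blade B) = cl_scale ((-1) ^ card B) (cl_blade B)"
  by (rule ext) (simp add: grade_involution_def cl_blade_def cl_scale_def)

lemma grade_involution_add: "grade_involution (x + y) = grade_involution x + grade_involution y"
  by (rule ext) (simp add: grade_involution_def algebra_simps)

lemma grade_involution_scale: "grade_involution (cl_scale c x) = cl_scale c (grade_involution x)"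
  by (rule ext) (simp add: grade_involution_def cl_scale_def algebra_simps)

locale clifford =
  fixes n :: nat and sig :: "nat \<Rightarrow> 'a::field_char_0"
  assumes sig_nonzero: "sig a \<noteq> 0"
begin

abbreviation cl_times :: "'a clif \<Rightarrow> 'a clif \<Rightarrow> 'a clif" (infixl "\<cdot>" 70) where
  "x \<cdot> y \<equiv> cl_mult n sig x y"

abbreviation pseudoscalar :: "'a clif" ("\<omega>") where
  "\<omega> \<equiv> cl_blade {..<n}"

lemma blade_sign_nonzero: "blade_sign sig A B \<noteq> 0"
  using sig_nonzero by (cases "finite (A \<inter> B)") (simp_all add: blade_sign_def)

lemma cl_mult_apply:
  "(x \<cdot> y) C = (if C \<subseteq> {..<n}
     then \<Sum>A\<in>Pow {..<n}. x A * y (symdiff A C) * blade_sign sig A (symdiff A C) else 0)"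
  by (simp add: cl_mult_def symdiff_def)

lemma cl_carrierD: "x \<in> cl_carrier n \<Longrightarrow> \<not> A \<subseteq> {..<n} \<Longrightarrow> x A = 0"
  by (simp add: cl_carrier_def)

lemma cl_mult_carrier [simp]: "x \<cdot> y \<in> cl_carrier n"
  by (simp add: cl_carrier_def cl_mult_def)

lemma cl_one_carrier [simp]: "cl_one \<in> cl_carrier n"
  by (simp add: cl_carrier_def cl_one_def)

lemma cl_blade_carrier [simp]: "B \<subseteq> {..<n} \<Longrightarrow> cl_blade B \<in> cl_carrier n"
  by (simp add: cl_carrier_def cl_blade_def)

lemma cl_add_carrier [simp]: "x \<in> cl_carrier n \<Longrightarrow> y \<in> cl_carrier n \<Longrightarrow> x + y \<in> cl_carrier n"
  by (simp add: cl_carrier_def)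

lemma cl_scale_carrier [simp]: "x \<in> cl_carrier n \<Longrightarrow> cl_scale c x \<in> cl_carrier n"
  by (simp add: cl_carrier_def cl_scale_def)

lemma grade_involution_carrier [simp]:
  "x \<in> cl_carrier n \<Longrightarrow> grade_involution x \<in> cl_carrier n"
  by (simp add: cl_carrier_def grade_involution_def)

lemma cl_mult_assoc: "(x \<cdot> y) \<cdot> z = x \<cdot> (y \<cdot> z)"
proof
  fix D
  let ?N = "{..<n}" and ?bs = "blade_sign sig"
  show "((x \<cdot> y) \<cdot> z) D = (x \<cdot> (y \<cdot> z)) D"
  proof (cases "D \<subseteq> ?N")
    case D: True
    have inner: "(\<Sum>B\<in>Pow ?N. y B * z (symdiff B (symdiff A D)) * ?bs B (symdiff B (symdiff A D)))
        = (\<Sum>B\<in>Pow ?N. y (symdiff A B) * z (symdiff B D) * ?bs (symdiff A B) (symdiff B D))"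
      if A: "A \<subseteq> ?N" for A
      using A by (intro sum.reindex_bij_witness[of _ "symdiff A" "symdiff A"])
        (auto simp: symdiff_subset symdiff_symdiff_left symdiff_assoc symdiff_left_commute)
    have cocycle: "?bs A (symdiff A B) * ?bs B (symdiff B D)
        = ?bs A (symdiff A D) * ?bs (symdiff A B) (symdiff B D)"
      if "A \<subseteq> ?N" "B \<subseteq> ?N" for A B
      using blade_sign_cocycle[of ?N A "symdiff A B" "symdiff B D" sig] that D
      by (simp add: symdiff_subset symdiff_symdiff_chain)
    have "((x \<cdot> y) \<cdot> z) D = (\<Sum>B\<in>Pow ?N. \<Sum>A\<in>Pow ?N.
        x A * y (symdiff A B) * z (symdiff B D) * (?bs A (symdiff A B) * ?bs B (symdiff B D)))"
      using D by (simp add: cl_mult_apply[of _ _ D] cl_mult_apply[of x y] sum_distrib_left sum_distrib_right mult_ac)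
    also have "\<dots> = (\<Sum>A\<in>Pow ?N. \<Sum>B\<in>Pow ?N.
        x A * y (symdiff A B) * z (symdiff B D) * (?bs A (symdiff A D) * ?bs (symdiff A B) (symdiff B D)))"
      by (subst sum.swap) (simp add: cocycle)
    also have "\<dots> = (\<Sum>A\<in>Pow ?N. x A * (\<Sum>B\<in>Pow ?N.
        y (symdiff A B) * z (symdiff B D) * ?bs (symdiff A B) (symdiff B D)) * ?bs A (symdiff A D))"
      by (simp add: sum_distrib_left sum_distrib_right mult_ac)
    also have "\<dots> = (x \<cdot> (y \<cdot> z)) D"
      using D by (simp add: cl_mult_apply[of _ _ D])
        (intro sum.cong refl, simp add: cl_mult_apply[of y z] symdiff_subset inner)
    finally show ?thesis .
  qed (simp add: cl_mult_apply)
qed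

lemma blade_mult_left:
  "B \<subseteq> {..<n} \<Longrightarrow>
     cl_blade B \<cdot> x = (\<lambda>D. if D \<subseteq> {..<n} then x (symdiff B D) * blade_sign sig B (symdiff B D) else 0)"
  by (rule ext) (simp add: cl_mult_apply cl_blade_def if_distrib[of "\<lambda>t. t * _"] cong: if_cong)

lemma blade_mult_right:
  assumes "B \<subseteq> {..<n}"
  shows "x \<cdot> cl_blade B = (\<lambda>D. if D \<subseteq> {..<n} then x (symdiff B D) * blade_sign sig (symdiff B D) B else 0)"
proof
  fix D
  show "(x \<cdot> cl_blade B) D = (if D \<subseteq> {..<n} then x (symdiff B D) * blade_sign sig (symdiff B D) B else 0)"
  proof (cases "D \<subseteq> {..<n}")
    case True
    have "(x \<cdot> cl_blade B) D = (\<Sum>A\<in>Pow {..<n}.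
        x A * (if symdiff A D = B then 1 else 0) * blade_sign sig A (symdiff A D))"
      using True by (simp add: cl_mult_apply cl_blade_def)
    also have "\<dots> = (\<Sum>A\<in>Pow {..<n}. if A = symdiff B D then x A * blade_sign sig A B else 0)"
      by (rule sum.cong) (auto simp: symdiff_eq_iff)
    finally show ?thesis
      using True assms by (simp add: symdiff_subset)
  qed (simp add: cl_mult_apply)
qed

lemma cl_one_eq_blade: "cl_one = cl_blade {}"
  by (simp add: cl_one_def cl_blade_def)

lemma cl_mult_one_left [simp]: "x \<in> cl_carrier n \<Longrightarrow> cl_one \<cdot> x = x"
  by (rule ext) (auto simp: cl_one_eq_blade blade_mult_left cl_carrierD)

lemma cl_mult_one_right [simp]: "x \<in> cl_carrier n \<Longrightarrow> x \<cdot> cl_one = x"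
  by (rule ext) (auto simp: cl_one_eq_blade blade_mult_right cl_carrierD)

lemma cl_mult_add_left: "(x + y) \<cdot> z = x \<cdot> z + y \<cdot> z"
  by (rule ext) (simp add: cl_mult_apply sum.distrib distrib_right)

lemma cl_mult_add_right: "x \<cdot> (y + z) = x \<cdot> y + x \<cdot> z"
  by (rule ext) (simp add: cl_mult_apply sum.distrib algebra_simps)

lemma cl_mult_scale_left: "cl_scale c x \<cdot> y = cl_scale c (x \<cdot> y)"
  by (rule ext) (simp add: cl_mult_apply cl_scale_def sum_distrib_left mult.assoc)

lemma cl_mult_scale_right: "x \<cdot> cl_scale c y = cl_scale c (x \<cdot> y)"
  by (rule ext) (simp add: cl_mult_apply cl_scale_def sum_distrib_left ac_simps)

lemmas cl_mult_linear = cl_mult_add_left cl_mult_add_right cl_mult_scale_left cl_mult_scale_right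

lemma grade_involution_mult: "grade_involution (x \<cdot> y) = grade_involution x \<cdot> grade_involution y"
proof
  fix D
  show "grade_involution (x \<cdot> y) D = (grade_involution x \<cdot> grade_involution y) D"
  proof (cases "D \<subseteq> {..<n}")
    case True
    have summand: "(-1) ^ card A * (x A * ((-1) ^ card (symdiff A D) * (y (symdiff A D) * b)))
        = (-1) ^ card D * (x A * (y (symdiff A D) * b))" if "A \<subseteq> {..<n}" for A b
    proof -
      have sign: "(-1::'a) ^ card A * (-1) ^ card (symdiff A D) = (-1) ^ card D"
        using that True by (intro minus_one_power_card_symdiff) (auto intro: finite_subset)
      show ?thesis
        by (simp only: flip: sign) (simp only: ac_simps)
    qed
    show ?thesis
      using True by (simp add: grade_involution_def cl_mult_apply sum_distrib_left)
        (intro sum.cong refl, simp add: summand mult.assoc)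
  qed (simp add: grade_involution_def cl_mult_apply)
qed

abbreviation units :: "'a clif set" where
  "units \<equiv> cl_units n sig (cl_carrier n)"

lemma cl_par_carrier: "x \<in> cl_par n j \<Longrightarrow> x \<in> cl_carrier n"
  by (simp add: cl_par_def)

lemma cl_par_iff_grade_involution:
  fixes x :: "'a clif"
  assumes "j < 2"
  shows "x \<in> cl_par n j \<longleftrightarrow> x \<in> cl_carrier n \<and> grade_involution x = cl_scale ((-1) ^ j) x"
proof -
  have parity: "card A mod 2 = j \<longleftrightarrow> (-1::'a) ^ card A = (-1) ^ j" for A
    using assms by (simp add: minus_one_power_eq_iff) presburger
  have pointwise: "(x A \<noteq> 0 \<longrightarrow> card A mod 2 = j) \<longleftrightarrow> (-1) ^ card A * x A = (-1) ^ j * x A" for A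
    by (cases "x A = 0") (simp_all add: parity)
  show ?thesis
    unfolding cl_par_def grade_involution_def cl_scale_def fun_eq_iff mem_Collect_eq pointwise ..
qed

lemma grade_involution_eigen_par:
  fixes x :: "'a clif"
  assumes "x \<in> cl_carrier n" "grade_involution x = cl_scale c x"
  shows "x \<in> cl_par n 0 \<union> cl_par n 1"
proof (cases "c = 1")
  case True
  then show ?thesis
    using assms cl_par_iff_grade_involution[of 0 x] by simp
next
  case False
  have "card A mod 2 = 1" if "x A \<noteq> 0" for A
  proof -
    have "(-1) ^ card A = c"
      using fun_cong[OF assms(2), of A] that by (simp add: grade_involution_def cl_scale_def)
    with False have "odd (card A)"
      by (auto simp: minus_one_power_iff)
    then show ?thesis
      by (simp add: odd_iff_mod_2_eq_one)
  qed
  then show ?thesis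
    using assms(1) by (simp add: cl_par_def)
qed

lemma cl_unitsI:
  "x \<in> S \<Longrightarrow> y \<in> cl_carrier n \<Longrightarrow> x \<cdot> y = cl_one \<Longrightarrow> y \<cdot> x = cl_one \<Longrightarrow> x \<in> cl_units n sig S"
  by (auto simp: cl_units_def)

lemma cl_inv_eqI:
  assumes "y \<in> cl_carrier n" "x \<cdot> y = cl_one" "y \<cdot> x = cl_one"
  shows "cl_inv n sig x = y"
  unfolding cl_inv_def
proof (rule the_equality)
  fix z
  assume z: "z \<in> cl_carrier n \<and> x \<cdot> z = cl_one \<and> z \<cdot> x = cl_one"
  then have "z = (y \<cdot> x) \<cdot> z"
    using assms by simp
  also have "\<dots> = y \<cdot> (x \<cdot> z)"
    by (rule cl_mult_assoc)
  also have "\<dots> = y"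
    using z assms by simp
  finally show "z = y" .
qed (use assms in simp)

lemma cl_centerI:
  "W \<in> cl_carrier n \<Longrightarrow> (\<And>y. y \<in> cl_carrier n \<Longrightarrow> W \<cdot> y = y \<cdot> W) \<Longrightarrow> W \<in> cl_center n sig"
  by (simp add: cl_center_def)

lemma unit_central_factors:
  assumes W: "W \<in> cl_center n sig" and T: "T \<in> cl_carrier n" and WT: "W \<cdot> T \<in> units"
  shows "W \<in> cl_units n sig (cl_center n sig)" "T \<in> units"
proof -
  obtain V where V: "V \<in> cl_carrier n" "(W \<cdot> T) \<cdot> V = cl_one" "V \<cdot> (W \<cdot> T) = cl_one"
    using WT by (auto simp: cl_units_def)
  have comm: "W \<cdot> y = y \<cdot> W" if "y \<in> cl_carrier n" for y
    using W that by (simp add: cl_center_def)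
  have "W \<cdot> (T \<cdot> V) = cl_one" "T \<cdot> V \<cdot> W = cl_one"
    using V(2) comm[OF V(1)] comm[OF T] by (metis cl_mult_assoc)+
  then show "W \<in> cl_units n sig (cl_center n sig)"
    using W V(1) by (intro cl_unitsI) simp_all
  have "T \<cdot> (V \<cdot> W) = cl_one" "V \<cdot> W \<cdot> T = cl_one"
    using V(2,3) comm[OF V(1)] comm[OF T] by (metis cl_mult_assoc)+
  then show "T \<in> units"
    using T V(1) by (intro cl_unitsI) simp_all
qed

lemma blade_commute_coeff:
  assumes "C \<subseteq> {..<n}" "B \<subseteq> {..<n}" "cl_blade C \<cdot> x = x \<cdot> cl_blade C"
  shows "x B * blade_sign sig C B = x B * blade_sign sig B C"
  using fun_cong[OF assms(3), of "symdiff C B"] assms(1,2)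
  by (simp add: blade_mult_left blade_mult_right symdiff_subset)

lemma coeff_zero_if_anticommuting:
  assumes "C \<subseteq> {..<n}" "B \<subseteq> {..<n}" "cl_blade C \<cdot> x = x \<cdot> cl_blade C"
    and "odd (card C * card B + card (C \<inter> B))"
  shows "x B = 0"
proof -
  have "blade_sign sig C B = - blade_sign sig B C"
    using blade_sign_swap[of C B sig] assms(1,2,4) by (simp add: finite_subset)
  then have "x B * (2 * blade_sign sig B C) = 0"
    using blade_commute_coeff[OF assms(1-3)] by (simp add: algebra_simps)
  then show ?thesis
    using blade_sign_nonzero by simp
qed

lemma commutant_of_par_coeff:
  assumes U: "\<And>X. X \<in> cl_par n j \<Longrightarrow> U \<cdot> X = X \<cdot> U" and "j < 2"
    and B: "B \<subseteq> {..<n}" "B \<noteq> {}" "B \<noteq> {..<n}"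
  shows "U B = 0"
proof -
  obtain a b where ab: "a \<in> B" "b \<in> {..<n}" "b \<notin> B"
    using B by blast
  show ?thesis
  proof (cases "j = 0")
    case True
    have "a \<noteq> b"
      using ab by blast
    with ab have "card {a, b} = 2" "{a, b} \<inter> B = {a}"
      by auto
    moreover have "cl_blade {a, b} \<in> cl_par n j"
      using True ab B(1) \<open>card {a, b} = 2\<close> by (auto simp: cl_par_def cl_carrier_def cl_blade_def)
    then have "cl_blade {a, b} \<cdot> U = U \<cdot> cl_blade {a, b}"
      using U by metis
    ultimately show ?thesis
      using ab B(1) by (intro coeff_zero_if_anticommuting[of "{a, b}"]) auto
  next
    case False
    define c where "c = (if odd (card B) then b else a)"
    have c: "c \<in> {..<n}" "odd (card B + card ({c} \<inter> B))"
      using ab B(1) by (auto simp: c_def)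
    have "cl_blade {c} \<in> cl_par n j"
      using False \<open>j < 2\<close> c by (auto simp: cl_par_def cl_carrier_def cl_blade_def)
    then have "cl_blade {c} \<cdot> U = U \<cdot> cl_blade {c}"
      using U by metis
    with c B(1) show ?thesis
      by (intro coeff_zero_if_anticommuting[of "{c}"]) auto
  qed
qed

lemma commutant_of_par:
  assumes "\<And>X. X \<in> cl_par n j \<Longrightarrow> U \<cdot> X = X \<cdot> U" "j < 2" "U \<in> cl_carrier n" "n \<ge> 1"
  shows "U = cl_scale (U {}) cl_one + cl_scale (U {..<n}) \<omega>"
proof
  fix B
  have "{..<n} \<noteq> {}"
    using assms(4) by (auto simp: lessThan_empty_iff)
  then show "U B = (cl_scale (U {}) cl_one + cl_scale (U {..<n}) \<omega>) B"
    using commutant_of_par_coeff[OF assms(1,2), of B] cl_carrierD[OF assms(3), of B]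
    by (cases "B \<subseteq> {..<n}") (auto simp: cl_scale_def cl_one_def cl_blade_def)
qed


lemma card_symdiff_top: "B \<subseteq> {..<n} \<Longrightarrow> card (symdiff {..<n} B) + card B = n"
  using card_symdiff_add[of "{..<n}" B] by (simp add: Int_absorb1 finite_subset)

lemma blade_sign_top_swap:
  "B \<subseteq> {..<n} \<Longrightarrow> blade_sign sig {..<n} B = (-1) ^ ((n + 1) * card B) * blade_sign sig B {..<n}"
  using blade_sign_swap[of "{..<n}" B sig] by (simp add: Int_absorb1 finite_subset algebra_simps)

lemma pseudoscalar_mult_left:
  "\<omega> \<cdot> x = (\<lambda>A. (-1) ^ ((n + 1) * card A) * x A) \<cdot> \<omega>"
  by (rule ext) (simp add: blade_mult_left blade_mult_right blade_sign_top_swap symdiff_subset)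

lemma pseudoscalar_central: "odd n \<Longrightarrow> \<omega> \<cdot> x = x \<cdot> \<omega>"
  by (simp add: pseudoscalar_mult_left)

lemma pseudoscalar_mult_left_even: "even n \<Longrightarrow> \<omega> \<cdot> x = grade_involution x \<cdot> \<omega>"
  by (simp add: pseudoscalar_mult_left grade_involution_def power_add power_mult)

lemma pseudoscalar_square: "\<omega> \<cdot> \<omega> = cl_scale (blade_sign sig {..<n} {..<n}) cl_one"
  by (rule ext) (simp add: blade_mult_left, auto simp: cl_scale_def cl_one_def cl_blade_def symdiff_def)

lemma grade_involution_pseudoscalar: "grade_involution \<omega> = cl_scale ((-1) ^ n) \<omega>"
  by (simp add: grade_involution_blade)

lemma twisted_conjugation_commutes:
  assumes T: "T \<in> cl_Gamma n sig j" and "j < 2"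
    and Ti: "Ti \<in> cl_carrier n" "T \<cdot> Ti = cl_one" "Ti \<cdot> T = cl_one"
    and X: "X \<in> cl_par n j"
  shows "(Ti \<cdot> grade_involution T) \<cdot> X = X \<cdot> (Ti \<cdot> grade_involution T)"
proof -
  let ?s = "(-1::'a) ^ j"
  define Y where "Y = T \<cdot> X \<cdot> Ti"
  have "Y \<in> cl_par n j"
    using T X cl_inv_eqI[OF Ti] by (simp add: cl_Gamma_def Y_def)
  then have "cl_scale ?s Y = grade_involution T \<cdot> grade_involution X \<cdot> grade_involution Ti"
    using \<open>j < 2\<close> by (simp add: cl_par_iff_grade_involution Y_def grade_involution_mult)
  also have "\<dots> = cl_scale ?s (grade_involution T \<cdot> X \<cdot> grade_involution Ti)"
    using X \<open>j < 2\<close> by (simp add: cl_par_iff_grade_involution cl_mult_linear)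
  finally have Y: "Y = grade_involution T \<cdot> X \<cdot> grade_involution Ti"
    by (rule cl_scale_cancel[rotated]) simp
  have inv: "grade_involution Ti \<cdot> grade_involution T = cl_one"
    using Ti(3) by (simp add: grade_involution_mult[symmetric])
  have "X \<in> cl_carrier n"
    using X by (rule cl_par_carrier)
  then have "grade_involution T \<cdot> X = Y \<cdot> grade_involution T"
    using inv by (simp add: Y cl_mult_assoc)
  then show ?thesis
    using Ti \<open>X \<in> cl_carrier n\<close> by (simp add: Y_def cl_mult_assoc flip: cl_mult_assoc[of Ti T])
qed

lemma Gamma_twist:
  assumes "T \<in> cl_Gamma n sig j" "j < 2" "n \<ge> 1"
  obtains l m where "grade_involution T = T \<cdot> (cl_scale l cl_one + cl_scale m \<omega>)"
proof -
  obtain Ti where Ti: "Ti \<in> cl_carrier n" "T \<cdot> Ti = cl_one" "Ti \<cdot> T = cl_one"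
    and T: "T \<in> cl_carrier n"
    using assms(1) by (auto simp: cl_Gamma_def cl_units_def)
  define U where "U = Ti \<cdot> grade_involution T"
  have "U = cl_scale (U {}) cl_one + cl_scale (U {..<n}) \<omega>"
    using twisted_conjugation_commutes[OF assms(1,2) Ti] assms(2,3)
    by (intro commutant_of_par[of j]) (simp_all add: U_def)
  moreover have "grade_involution T = T \<cdot> U"
    using Ti(2) T by (simp add: U_def flip: cl_mult_assoc)
  ultimately show ?thesis
    using that by metis
qed

lemma twisted_unit_even:
  assumes "even n" "n \<ge> 1" "T \<in> units"
    and twist: "grade_involution T = T \<cdot> (cl_scale l cl_one + cl_scale m \<omega>)"
  shows "T \<in> cl_par n 0 \<union> cl_par n 1"
proof -
  obtain Ti where T: "T \<in> cl_carrier n" and Ti: "Ti \<in> cl_carrier n" "T \<cdot> Ti = cl_one" "Ti \<cdot> T = cl_one"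
    using assms(3) by (auto simp: cl_units_def)
  have top: "{..<n} \<noteq> {}"
    using assms(2) by (auto simp: lessThan_empty_iff)
  define u where "u = cl_scale l cl_one + cl_scale m \<omega>"
  have "T = grade_involution (T \<cdot> u)"
    using grade_involution_involutive[of T] by (simp only: twist u_def)
  also have "\<dots> = T \<cdot> u \<cdot> grade_involution u"
    by (simp only: grade_involution_mult twist u_def)
  also have "grade_involution u = u"
    using \<open>even n\<close> by (simp add: u_def grade_involution_add grade_involution_scale grade_involution_pseudoscalar)
  finally have "T = T \<cdot> (u \<cdot> u)"
    unfolding cl_mult_assoc .
  then have "u \<cdot> u = cl_one"
    using Ti by (metis cl_mult_assoc cl_mult_carrier cl_mult_one_left)
  moreover have "(u \<cdot> u) {..<n} = 2 * l * m"
    using top by (simp add: u_def cl_mult_linear pseudoscalar_square)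
      (simp add: cl_scale_def cl_one_def cl_blade_def)
  ultimately have "l * m = 0"
    using top by (simp add: cl_one_def)
  have "m = 0"
  proof (rule ccontr)
    assume "m \<noteq> 0"
    with \<open>l * m = 0\<close> have "grade_involution T = cl_scale m (T \<cdot> \<omega>)"
      using twist T by (simp add: cl_mult_linear)
    also have "T \<cdot> \<omega> = \<omega> \<cdot> grade_involution T"
      using \<open>even n\<close> by (simp add: pseudoscalar_mult_left_even)
    finally have "grade_involution T = cl_scale m (\<omega> \<cdot> grade_involution T)" .
    then have "cl_one = cl_scale m (\<omega> \<cdot> cl_one)"
      using Ti(2) by (metis cl_mult_assoc cl_mult_scale_left grade_involution_mult grade_involution_one)
    then have "cl_one {} = cl_scale m \<omega> {}"
      by simp
    then show False
      using top by (simp add: cl_scale_def cl_one_def cl_blade_def)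
  qed
  then have "grade_involution T = cl_scale l T"
    using twist T by (simp add: cl_mult_linear)
  with T show ?thesis
    by (rule grade_involution_eigen_par)
qed

lemma twist_coeff:
  assumes "T \<in> cl_carrier n" "grade_involution T = T \<cdot> (cl_scale l cl_one + cl_scale m \<omega>)"
    and "B \<subseteq> {..<n}"
  shows "(-1) ^ card B * T B
       = l * T B + m * (T (symdiff {..<n} B) * blade_sign sig (symdiff {..<n} B) {..<n})"
proof -
  have "grade_involution T = cl_scale l T + cl_scale m (T \<cdot> \<omega>)"
    using assms(1,2) by (simp add: cl_mult_linear)
  from fun_cong[OF this, of B] show ?thesis
    using assms(3) by (simp add: blade_mult_right grade_involution_def cl_scale_def)
qed

lemma parity_symdiff_top:
  "odd n \<Longrightarrow> B \<subseteq> {..<n} \<Longrightarrow> even (card (symdiff {..<n} B)) \<longleftrightarrow> odd (card B)"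
  using card_symdiff_top[of B] by (metis even_add)

lemma pseudoscalar_span_central:
  "odd n \<Longrightarrow> cl_scale a cl_one + cl_scale b \<omega> \<in> cl_center n sig"
  by (intro cl_centerI) (simp_all add: cl_mult_linear pseudoscalar_central)

lemma twisted_odd_factor:
  assumes "odd n" "T \<in> cl_carrier n" "l \<noteq> -1"
    and twist: "grade_involution T = T \<cdot> (cl_scale l cl_one + cl_scale m \<omega>)"
  shows "T = (cl_one + cl_scale (- m / (1 + l)) \<omega>) \<cdot> (\<lambda>A. if even (card A) then T A else 0)"
    (is "T = ?W \<cdot> ?T0")
proof
  fix B
  have "?T0 \<in> cl_carrier n"
    using assms(2) by (auto simp: cl_carrier_def)
  then have "?W \<cdot> ?T0 = ?T0 + cl_scale (- m / (1 + l)) (?T0 \<cdot> \<omega>)"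
    using \<open>odd n\<close> by (simp add: cl_mult_linear pseudoscalar_central)
  moreover have "T B = ?T0 B + - m / (1 + l) * (?T0 (symdiff {..<n} B) * blade_sign sig (symdiff {..<n} B) {..<n})"
    if B: "B \<subseteq> {..<n}"
  proof (cases "even (card B)")
    case True
    then show ?thesis
      using parity_symdiff_top[OF \<open>odd n\<close> B] by simp
  next
    case False
    define X where "X = T (symdiff {..<n} B) * blade_sign sig (symdiff {..<n} B) {..<n}"
    have "- T B = l * T B + m * X"
      using twist_coeff[OF assms(2) twist B] False by (simp add: X_def)
    then have "(1 + l) * T B = - (m * X)"
      by (simp add: algebra_simps)
        (metis add.commute add_diff_cancel_right' diff_minus_eq_add minus_add_distrib add_right_imp_eq)
    moreover have "1 + l \<noteq> 0"
      using \<open>l \<noteq> -1\<close> by (metis add.commute add_eq_0_iff)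
    ultimately show ?thesis
      using False parity_symdiff_top[OF \<open>odd n\<close> B] by (simp add: X_def field_simps)
  qed
  ultimately show "T B = (?W \<cdot> ?T0) B"
    using assms(2) by (cases "B \<subseteq> {..<n}") (simp_all add: blade_mult_right cl_scale_def cl_carrierD)
qed

lemma twisted_odd_minus_one:
  assumes "odd n" "T \<in> cl_carrier n"
    and twist: "grade_involution T = T \<cdot> (cl_scale (-1) cl_one + cl_scale m \<omega>)"
  shows "T \<in> cl_par n 1"
proof -
  have "T B = 0" if B: "B \<subseteq> {..<n}" "even (card B)" for B
  proof -
    define B' where "B' = symdiff {..<n} B"
    have B': "B' \<subseteq> {..<n}" "odd (card B')" "symdiff {..<n} B' = B"
      using B parity_symdiff_top[OF \<open>odd n\<close> B(1)] by (simp_all add: B'_def symdiff_subset)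
    have "m * (T B * blade_sign sig B {..<n}) = 0"
      using twist_coeff[OF assms(2) twist B'(1)] B' by simp
    then have "m * T B = 0"
      using blade_sign_nonzero by simp
    moreover have "2 * T B = m * (T B' * blade_sign sig B' {..<n})"
      using twist_coeff[OF assms(2) twist B(1)] B(2) by (simp add: B'_def)
    ultimately show ?thesis
      by (cases "m = 0") (simp_all add: mult.left_commute[of m])
  qed
  moreover have "A \<subseteq> {..<n}" if "T A \<noteq> 0" for A
    using that assms(2) cl_carrierD by blast
  ultimately have "card A mod 2 = 1" if "T A \<noteq> 0" for A
    using that by (meson odd_iff_mod_2_eq_one)
  then show ?thesis
    using assms(2) by (simp add: cl_par_def)
qed

lemma odd_par_factor:
  assumes "odd n" "T \<in> cl_par n 1"
  defines "T' \<equiv> cl_scale (1 / blade_sign sig {..<n} {..<n}) \<omega> \<cdot> T"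
  shows "T = \<omega> \<cdot> T'" "T' \<in> cl_par n 0"
proof -
  have T: "T \<in> cl_carrier n"
    using assms(2) by (rule cl_par_carrier)
  show "T = \<omega> \<cdot> T'"
    using T blade_sign_nonzero
    by (simp add: T'_def cl_mult_linear pseudoscalar_square flip: cl_mult_assoc)
  have "grade_involution T = cl_scale (-1) T"
    using assms(2) cl_par_iff_grade_involution[of 1 T] by simp
  then show "T' \<in> cl_par n 0"
    using \<open>odd n\<close> by (simp add: cl_par_iff_grade_involution T'_def grade_involution_mult
        grade_involution_scale grade_involution_pseudoscalar cl_mult_linear)
qed

lemma twisted_odd:
  assumes "odd n" "T \<in> cl_carrier n"
    and twist: "grade_involution T = T \<cdot> (cl_scale l cl_one + cl_scale m \<omega>)"
  obtains W T0 where "W \<in> cl_center n sig" "T0 \<in> cl_par n 0" "T = W \<cdot> T0"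
proof (cases "l = -1")
  case True
  then show ?thesis
    using that odd_par_factor[OF \<open>odd n\<close> twisted_odd_minus_one[OF assms(1,2)]] twist
      pseudoscalar_span_central[OF \<open>odd n\<close>, of 0 1] by auto
next
  case False
  have "(\<lambda>A. if even (card A) then T A else 0) \<in> cl_par n 0"
    using assms(2) by (auto simp: cl_par_def cl_carrier_def)
  then show ?thesis
    using that twisted_odd_factor[OF assms(1,2) False twist]
      pseudoscalar_span_central[OF \<open>odd n\<close>, of 1] by auto
qed

lemma cl_par_inverse:
  assumes "k < 2" "T \<in> cl_par n k" "Ti \<in> cl_carrier n" "T \<cdot> Ti = cl_one" "Ti \<cdot> T = cl_one"
  shows "Ti \<in> cl_par n k"
proof -
  let ?s = "(-1::'a) ^ k"
  have "?s * ?s = 1"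
    by (simp flip: power_mult_distrib)
  then have "cl_inv n sig (grade_involution T) = cl_scale ?s Ti"
    using assms by (intro cl_inv_eqI) (simp_all add: cl_par_iff_grade_involution cl_mult_linear)
  moreover have "cl_inv n sig (grade_involution T) = grade_involution Ti"
    using assms(3-5) by (intro cl_inv_eqI) (simp_all flip: grade_involution_mult)
  ultimately show ?thesis
    using assms by (simp add: cl_par_iff_grade_involution)
qed

lemma cl_par_conjugate:
  assumes "j < 2" "k < 2" "T \<in> cl_par n k" "Ti \<in> cl_par n k" "X \<in> cl_par n j"
  shows "T \<cdot> X \<cdot> Ti \<in> cl_par n j"
proof -
  have sign: "(-1::'a) ^ k * ((-1) ^ j * (-1) ^ k) = (-1) ^ j"
    by (simp add: mult.left_commute flip: power_mult_distrib)
  show ?thesis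
    using assms by (simp add: cl_par_iff_grade_involution grade_involution_mult cl_mult_linear sign)
qed

lemma P_subset_Gamma:
  assumes "j < 2"
  shows "cl_P n sig \<subseteq> cl_Gamma n sig j"
proof
  fix T
  assume "T \<in> cl_P n sig"
  then obtain W T' k where T: "T = W \<cdot> T'" and k: "k < 2"
    and W: "W \<in> cl_units n sig (cl_center n sig)" and T': "T' \<in> cl_units n sig (cl_par n k)"
    unfolding cl_P_def by (auto; metis less_2_cases_iff)
  obtain Wi where Wi: "Wi \<in> cl_carrier n" "W \<cdot> Wi = cl_one" "Wi \<cdot> W = cl_one"
    and W_comm: "\<And>y. y \<in> cl_carrier n \<Longrightarrow> W \<cdot> y = y \<cdot> W"
    using W by (auto simp: cl_units_def cl_center_def)
  obtain T'i where T'i: "T'i \<in> cl_carrier n" "T' \<cdot> T'i = cl_one" "T'i \<cdot> T' = cl_one"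
    and T'_par: "T' \<in> cl_par n k"
    using T' by (auto simp: cl_units_def)
  have T'_carrier: "T' \<in> cl_carrier n"
    using T'_par by (rule cl_par_carrier)
  have inv: "T \<cdot> (T'i \<cdot> Wi) = cl_one" "(T'i \<cdot> Wi) \<cdot> T = cl_one"
    using Wi T'i T'_carrier by (metis T cl_mult_assoc cl_mult_one_left)+
  have "T \<cdot> X \<cdot> cl_inv n sig T \<in> cl_par n j" if X: "X \<in> cl_par n j" for X
  proof -
    have "T \<cdot> X \<cdot> cl_inv n sig T = W \<cdot> (T' \<cdot> X \<cdot> T'i) \<cdot> Wi"
      using cl_inv_eqI[OF _ inv] by (simp add: T cl_mult_assoc)
    also have "\<dots> = T' \<cdot> X \<cdot> T'i"
      using W_comm Wi T'i(1) by (simp add: cl_mult_assoc)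
    finally show ?thesis
      using cl_par_conjugate[OF assms k T'_par cl_par_inverse[OF k T'_par T'i] X] by simp
  qed
  moreover have "T \<in> units"
    using inv by (intro cl_unitsI) (simp_all add: T)
  ultimately show "T \<in> cl_Gamma n sig j"
    by (simp add: cl_Gamma_def)
qed

lemma Gamma_subset_par_units_even:
  assumes "even n" "n \<ge> 1" "j < 2"
  shows "cl_Gamma n sig j \<subseteq> cl_units n sig (cl_par n 0) \<union> cl_units n sig (cl_par n 1)"
proof
  fix T
  assume T: "T \<in> cl_Gamma n sig j"
  then have "T \<in> units"
    by (simp add: cl_Gamma_def)
  moreover obtain l m where "grade_involution T = T \<cdot> (cl_scale l cl_one + cl_scale m \<omega>)"
    using Gamma_twist[OF T assms(3,2)] .
  ultimately have "T \<in> cl_par n 0 \<union> cl_par n 1"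
    using twisted_unit_even assms(1,2) by blast
  with \<open>T \<in> units\<close> show "T \<in> cl_units n sig (cl_par n 0) \<union> cl_units n sig (cl_par n 1)"
    by (auto simp: cl_units_def)
qed

lemma Gamma_subset_central_par_units_odd:
  assumes "odd n" "j < 2"
  shows "cl_Gamma n sig j \<subseteq> {W \<cdot> T | W T.
           W \<in> cl_units n sig (cl_center n sig) \<and> T \<in> cl_units n sig (cl_par n 0)}"
proof
  fix T
  assume T: "T \<in> cl_Gamma n sig j"
  then have unit: "T \<in> units"
    by (simp add: cl_Gamma_def)
  have "n \<ge> 1"
    using \<open>odd n\<close> by (cases n) auto
  obtain l m where "grade_involution T = T \<cdot> (cl_scale l cl_one + cl_scale m \<omega>)"
    using Gamma_twist[OF T \<open>j < 2\<close> \<open>n \<ge> 1\<close>] .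
  moreover have "T \<in> cl_carrier n"
    using unit by (simp add: cl_units_def)
  ultimately obtain W T0 where W: "W \<in> cl_center n sig" and T0: "T0 \<in> cl_par n 0"
    and factor: "T = W \<cdot> T0"
    using twisted_odd[OF \<open>odd n\<close>] by blast
  then have "W \<in> cl_units n sig (cl_center n sig)" "T0 \<in> cl_units n sig (cl_par n 0)"
    using unit_central_factors[OF W cl_par_carrier[OF T0]] unit by (auto simp: cl_units_def)
  with factor show "T \<in> {W \<cdot> T | W T.
           W \<in> cl_units n sig (cl_center n sig) \<and> T \<in> cl_units n sig (cl_par n 0)}"
    by blast
qed

lemma cl_one_central_unit: "cl_one \<in> cl_units n sig (cl_center n sig)"
  by (intro cl_unitsI[where y = cl_one] cl_centerI) simp_all

lemma cl_thm_concl_holds: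
  assumes "n \<ge> 1"
  shows "cl_thm_concl n sig"
proof -
  define Q where "Q = (if even n then cl_units n sig (cl_par n 0) \<union> cl_units n sig (cl_par n 1)
    else {W \<cdot> T | W T. W \<in> cl_units n sig (cl_center n sig) \<and> T \<in> cl_units n sig (cl_par n 0)})"
  have Gamma_Q: "cl_Gamma n sig j \<subseteq> Q" if "j < 2" for j
    using Gamma_subset_par_units_even[OF _ assms that] Gamma_subset_central_par_units_odd[OF _ that]
    by (simp add: Q_def)
  have Q_P: "Q \<subseteq> cl_P n sig"
  proof
    fix T
    assume "T \<in> Q"
    moreover have "T = cl_one \<cdot> T" if "T \<in> cl_units n sig (cl_par n k)" for k
      using that by (auto simp: cl_units_def dest: cl_par_carrier)
    ultimately show "T \<in> cl_P n sig"
      using cl_one_central_unit unfolding Q_def cl_P_def by (auto split: if_splits)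
  qed
  have "cl_P n sig = cl_Gamma n sig 0" "cl_P n sig = cl_Gamma n sig 1" and P_Q: "cl_P n sig = Q"
    using Gamma_Q[of 0] Gamma_Q[of 1] Q_P P_subset_Gamma[of 0] P_subset_Gamma[of 1] by auto
  then show ?thesis
    unfolding cl_thm_concl_def by (intro conjI impI) (simp_all only: P_Q Q_def if_True if_False)
qed

end

lemma clifford_sig_pq: "clifford (sig_pq p)"
  by unfold_locales (simp add: sig_pq_def)

lemma clifford_complex: "clifford (\<lambda>_. 1 :: complex)"
  by unfold_locales simp

theorem mainTheorem4:
  fixes n :: nat
  assumes "n \<ge> 2"
  shows "(\<forall>p q. p + q = n \<longrightarrow> cl_thm_concl n (sig_pq p))
       \<and> cl_thm_concl n (\<lambda>_. (1::complex))"
  using clifford.cl_thm_concl_holds[OF clifford_sig_pq] clifford.cl_thm_concl_holds[OF clifford_complex]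
    assms by simp

end
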